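(* Consider a stochastic block model with $K$ communities, membership matrix $\Theta\in\mathbb M_{n,K}$ with community sizes $n_1,\dots,n_K\ge1$, and symmetric $B\in[0,1]^{K\times K}$ with $\mathrm{rank}(B)=K'<K$. Let $P=\Theta B\Theta^\intercal=U\Sigma U^\intercal$ be its eigenvalue decomposition with $U\in\mathbb R^{n\times K'}$ having orthonormal columns. Let $\Delta=\mathrm{diag}(\sqrt{n_1},\dots,\sqrt{n_K})$ and $\Delta B\Delta=LDL^\intercal$ the eigenvalue decomposition with $L\in\mathbb R^{K\times K'}$. Suppose there exist deterministic sequences $\{\eta_n\}$ and $\{\iota_n\}$ such that $$\min_{1\le k<l\le K}B_{kk}+B_{ll}-2B_{kl}\ge\eta_n>0$$ and $0<\Sigma_{ii}\le\iota_n$ for all $1\le i\le K'$. Then $\min_{k\ne l}\|L_{k\ast}/\sqrt{n_k}-L_{l\ast}/\sqrt{n_l}\|_2\ge\xi_n$ with $\xi_n=\sqrt{\eta_n/\iota_n}$.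
   Context: $\mathbb M_{n,K}$: $n\times K$ 0/1 matrices with exactly one $1$ per row; $n_k$ is the number of rows with their $1$ in column $k$. $M_{k\ast}$ denotes the $k$-th row of $M$. *)

theory Defs
  imports "HOL-Analysis.Analysis"
begin

definition membership_matrix :: "real^'k^'n \<Rightarrow> bool" where
  "membership_matrix Theta \<longleftrightarrow>
     (\<forall>i j. Theta $ i $ j = 0 \<or> Theta $ i $ j = 1) \<and>
     (\<forall>i. \<exists>!j. Theta $ i $ j = 1)"

definition comm_size :: "real^'k^'n \<Rightarrow> 'k \<Rightarrow> nat" where
  "comm_size Theta k = card {i. Theta $ i $ k = 1}"

definition diag_mat :: "real^'n^'n \<Rightarrow> bool" where
  "diag_mat M \<longleftrightarrow> (\<forall>i j. i \<noteq> j \<longrightarrow> M $ i $ j = 0)"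

end

theory Submission
  imports Defs
begin

(* Q = Theta Delta^-1 has orthonormal columns and Q^T P Q = Delta B Delta; as P = U Sigma U^T
   with U^T U = I and Sigma <= iota, the quadratic form of Delta B Delta is bounded by iota |y|^2.
   At x = Delta^-1 (e_k - e_l) this form equals B_kk + B_ll - 2 B_kl >= eta.  Since
   Delta B Delta = L D L^T with L^T L = I, its value at x equals its value at L L^T x, a vector of
   norm |L^T x| = |L_k / sqrt n_k - L_l / sqrt n_l|.  Hence eta <= iota |L^T x|^2. *)

definition diag_matrix :: "('n::finite \<Rightarrow> 'a::zero) \<Rightarrow> 'a^'n^'n" where
  "diag_matrix d = (\<chi> i j. if i = j then d i else 0)"

lemma diag_matrix_const: "diag_matrix (\<lambda>_. c) = mat c"
  by (simp add: diag_matrix_def mat_def)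

lemma transpose_diag_matrix [simp]: "transpose (diag_matrix d) = diag_matrix d"
  by (simp add: diag_matrix_def transpose_def vec_eq_iff)

lemma diag_matrix_mult:
  fixes d e :: "'n::finite \<Rightarrow> 'a::semiring_1"
  shows "diag_matrix d ** diag_matrix e = diag_matrix (\<lambda>i. d i * e i)"
  by (simp add: diag_matrix_def matrix_matrix_mult_def vec_eq_iff if_distrib [of "\<lambda>x. x * _"] cong: if_cong)

lemma diag_matrix_vector_mult:
  fixes d :: "'n::finite \<Rightarrow> 'a::semiring_1"
  shows "diag_matrix d *v x = (\<chi> i. d i * x $ i)"
  by (simp add: diag_matrix_def matrix_vector_mult_def vec_eq_iff if_distrib [of "\<lambda>x. x * _"] cong: if_cong)

lemma diag_matrix_axis:
  fixes d :: "'n::finite \<Rightarrow> real"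
  shows "diag_matrix d *v axis k 1 = d k *\<^sub>R axis k 1"
  by (simp add: diag_matrix_vector_mult vec_eq_iff axis_def)

lemma inner_matrix_vector_transpose:
  fixes A :: "real^'m^'n"
  shows "inner x (A *v y) = inner (transpose A *v x) y"
  by (metis dot_lmul_matrix transpose_matrix_vector)

lemma transpose_matrix_vector_axis:
  fixes A :: "real^'m^'n"
  shows "transpose A *v axis i 1 = A $ i"
  by (simp add: matrix_vector_mult_basis column_def vec_eq_iff transpose_def)

lemma inner_axis_matrix_axis:
  fixes A :: "real^'n^'n"
  shows "inner (axis i 1) (A *v axis j 1) = A $ i $ j"
  by (simp only: inner_matrix_vector_transpose [of _ A] transpose_matrix_vector_axis)
    (simp add: inner_axis)

lemma quadratic_form_congruence:
  fixes Q :: "real^'m^'n" and A :: "real^'n^'n"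
  shows "inner y ((transpose Q ** A ** Q) *v y) = inner (Q *v y) (A *v (Q *v y))"
  using inner_matrix_vector_transpose [of y "transpose Q" "A *v (Q *v y)"]
  by (simp only: matrix_vector_mul_assoc matrix_mul_assoc transpose_transpose)

lemma norm_orthonormal_columns:
  fixes Q :: "real^'m^'n"
  assumes "transpose Q ** Q = mat 1"
  shows "norm (Q *v y) = norm y"
proof -
  have "inner (Q *v y) (Q *v y) = inner y y"
    by (simp only: inner_matrix_vector_transpose matrix_vector_mul_assoc assms matrix_vector_mul_lid)
  then show ?thesis
    by (simp add: norm_eq_sqrt_inner)
qed

lemma norm_transpose_orthonormal_le:
  fixes U :: "real^'m^'n"
  assumes "transpose U ** U = mat 1"
  shows "norm (transpose U *v z) \<le> norm z"
proof -
  let ?s = "transpose U *v z"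
  have "norm ?s ^ 2 = inner (U *v ?s) z"
    using inner_matrix_vector_transpose [of ?s "transpose U" z]
    by (simp only: power2_norm_eq_inner transpose_transpose)
  also have "\<dots> \<le> norm (U *v ?s) * norm z"
    by (rule norm_cauchy_schwarz)
  also have "\<dots> = norm ?s * norm z"
    by (simp only: norm_orthonormal_columns [OF assms])
  finally have "norm ?s * norm ?s \<le> norm ?s * norm z"
    by (simp add: power2_eq_square)
  then show ?thesis
    by (cases "norm ?s = 0") auto
qed

lemma diag_quadratic_form_le:
  fixes S :: "real^'n^'n"
  assumes "diag_mat S" and "\<And>i. S $ i $ i \<le> c"
  shows "inner s (S *v s) \<le> c * norm s ^ 2"
proof -
  have "(S *v s) $ i = S $ i $ i * s $ i" for i
    using assms(1) unfolding diag_mat_def matrix_vector_mult_def by (simp add: sum.remove [of UNIV i])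
  then have "inner s (S *v s) = (\<Sum>i\<in>UNIV. S $ i $ i * (s $ i)\<^sup>2)"
    by (simp add: inner_vec_def power2_eq_square mult.commute mult.left_commute)
  also have "\<dots> \<le> (\<Sum>i\<in>UNIV. c * (s $ i)\<^sup>2)"
    by (intro sum_mono mult_right_mono assms(2)) simp
  also have "\<dots> = c * norm s ^ 2"
    by (simp add: sum_distrib_left norm_vec_def L2_set_def sum_nonneg)
  finally show ?thesis .
qed

lemma spectral_quadratic_form_le:
  fixes U :: "real^'m^'n" and S :: "real^'m^'m"
  assumes "transpose U ** U = mat 1" and "diag_mat S"
    and "\<And>i. S $ i $ i \<le> c" and "0 \<le> c"
  shows "inner z ((U ** S ** transpose U) *v z) \<le> c * norm z ^ 2"
proof -
  have "inner z ((U ** S ** transpose U) *v z) = inner (transpose U *v z) (S *v (transpose U *v z))"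
    using quadratic_form_congruence [of z "transpose U" S] by (simp only: transpose_transpose)
  also have "\<dots> \<le> c * norm (transpose U *v z) ^ 2"
    using assms(2,3) by (rule diag_quadratic_form_le)
  also have "\<dots> \<le> c * norm z ^ 2"
    using assms(4) norm_transpose_orthonormal_le [OF assms(1)]
    by (simp add: mult_left_mono power_mono)
  finally show ?thesis .
qed

lemma quadratic_form_le_norm_transpose:
  fixes L :: "real^'m^'n" and D :: "real^'m^'m"
  assumes L: "transpose L ** L = mat 1"
    and bound: "\<And>y. inner y ((L ** D ** transpose L) *v y) \<le> c * norm y ^ 2"
  shows "inner x ((L ** D ** transpose L) *v x) \<le> c * norm (transpose L *v x) ^ 2"
proof -
  let ?M = "L ** D ** transpose L" and ?y = "L *v (transpose L *v x)"
  have form: "inner y (?M *v y) = inner (transpose L *v y) (D *v (transpose L *v y))" for y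
    using quadratic_form_congruence [of y "transpose L" D] by (simp only: transpose_transpose)
  have "transpose L *v (L *v w) = w" for w
    by (simp only: matrix_vector_mul_assoc L matrix_vector_mul_lid)
  then have "transpose L *v ?y = transpose L *v x" .
  then have "inner x (?M *v x) = inner ?y (?M *v ?y)"
    by (simp only: form)
  also have "\<dots> \<le> c * norm ?y ^ 2"
    by (rule bound)
  finally show ?thesis
    by (simp only: norm_orthonormal_columns [OF L])
qed

lemma quadratic_form_axis_diff:
  fixes B :: "real^'n^'n"
  assumes "transpose B = B"
  shows "inner (axis k 1 - axis l 1) (B *v (axis k 1 - axis l 1)) = B $ k $ k + B $ l $ l - 2 * B $ k $ l"
proof -
  have "B $ l $ k = B $ k $ l"
    using assms by (metis transpose_def vec_lambda_beta)
  moreover have "inner (axis k 1 - axis l 1) (B *v (axis k 1 - axis l 1))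
      = B $ k $ k - B $ k $ l - (B $ l $ k - B $ l $ l)"
    by (simp only: matrix_vector_mult_diff_distrib inner_diff_left inner_diff_right inner_axis_matrix_axis)
  ultimately show ?thesis
    by linarith
qed

lemma membership_gram:
  fixes Theta :: "real^'k^'n"
  assumes "membership_matrix Theta"
  shows "transpose Theta ** Theta = diag_matrix (\<lambda>k. real (comm_size Theta k))"
proof -
  have entry: "Theta $ i $ a * Theta $ i $ b = (if a = b \<and> Theta $ i $ a = 1 then 1 else 0)" for i a b
  proof -
    have "\<And>j. Theta $ i $ j = 0 \<or> Theta $ i $ j = 1" and "\<exists>!j. Theta $ i $ j = 1"
      using assms unfolding membership_matrix_def by auto
    then show ?thesis
      by (metis mult_cancel_left1 mult_cancel_right1 mult_zero_left mult_zero_right)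
  qed
  have "(transpose Theta ** Theta) $ a $ b = (\<Sum>i\<in>UNIV. if a = b \<and> Theta $ i $ a = 1 then 1 else 0)" for a b
    by (simp add: matrix_matrix_mult_def transpose_def entry)
  then show ?thesis
    by (auto simp: vec_eq_iff diag_matrix_def comm_size_def sum.If_cases)
qed

lemma membership_scaled_orthonormal:
  fixes Theta :: "real^'k^'n"
  defines "Q \<equiv> Theta ** diag_matrix (\<lambda>k. 1 / sqrt (real (comm_size Theta k)))"
  assumes "membership_matrix Theta" and "\<And>k. 0 < comm_size Theta k"
  shows "transpose Q ** Q = mat 1"
proof -
  have "transpose Q ** Q = diag_matrix (\<lambda>k. 1 / sqrt (real (comm_size Theta k)))
      ** (transpose Theta ** Theta) ** diag_matrix (\<lambda>k. 1 / sqrt (real (comm_size Theta k)))"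
    by (simp only: Q_def matrix_transpose_mul transpose_diag_matrix matrix_mul_assoc)
  also have "\<dots> = mat 1"
    by (simp add: membership_gram [OF assms(2)] diag_matrix_mult assms(3) [THEN gr_implies_not0]
        flip: diag_matrix_const)
  finally show ?thesis .
qed

lemma membership_congruence:
  fixes Theta :: "real^'k^'n" and B :: "real^'k^'k"
  defines "Q \<equiv> Theta ** diag_matrix (\<lambda>k. 1 / sqrt (real (comm_size Theta k)))"
    and "Delta \<equiv> diag_matrix (\<lambda>k. sqrt (real (comm_size Theta k)))"
  assumes "membership_matrix Theta"
  shows "transpose Q ** (Theta ** B ** transpose Theta) ** Q = Delta ** B ** Delta"
proof -
  let ?Dinv = "diag_matrix (\<lambda>k. 1 / sqrt (real (comm_size Theta k)))"
  have "?Dinv ** (transpose Theta ** Theta) = Delta"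
    by (simp add: Delta_def membership_gram [OF assms(3)] diag_matrix_mult real_div_sqrt)
  moreover have "(transpose Theta ** Theta) ** ?Dinv = Delta"
    by (simp add: Delta_def membership_gram [OF assms(3)] diag_matrix_mult real_div_sqrt)
  moreover have "transpose Q ** (Theta ** B ** transpose Theta) ** Q
      = (?Dinv ** (transpose Theta ** Theta)) ** B ** ((transpose Theta ** Theta) ** ?Dinv)"
    by (simp add: Q_def matrix_transpose_mul matrix_mul_assoc)
  ultimately show ?thesis
    by simp
qed

lemma membership_block_quadratic_form_le:
  fixes Theta :: "real^'k^'n" and B :: "real^'k^'k"
    and U :: "real^'r^'n" and Sigma :: "real^'r^'r"
  defines "Delta \<equiv> diag_matrix (\<lambda>k. sqrt (real (comm_size Theta k)))"
  assumes memb: "membership_matrix Theta" and sizes: "\<And>k. 0 < comm_size Theta k"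
    and U_orth: "transpose U ** U = mat 1" and Sigma_diag: "diag_mat Sigma"
    and P_eig: "Theta ** B ** transpose Theta = U ** Sigma ** transpose U"
    and Sigma_le: "\<And>i. Sigma $ i $ i \<le> c" and "0 \<le> c"
  shows "inner y ((Delta ** B ** Delta) *v y) \<le> c * norm y ^ 2"
proof -
  let ?Q = "Theta ** diag_matrix (\<lambda>k. 1 / sqrt (real (comm_size Theta k)))"
  have "Delta ** B ** Delta = transpose ?Q ** (U ** Sigma ** transpose U) ** ?Q"
    using membership_congruence [OF memb, of B] unfolding Delta_def P_eig by (rule sym)
  then have "inner y ((Delta ** B ** Delta) *v y)
      = inner (?Q *v y) ((U ** Sigma ** transpose U) *v (?Q *v y))"
    by (simp only: quadratic_form_congruence)
  also have "\<dots> \<le> c * norm (?Q *v y) ^ 2"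
    by (rule spectral_quadratic_form_le [OF U_orth Sigma_diag Sigma_le \<open>0 \<le> c\<close>])
  also have "\<dots> = c * norm y ^ 2"
    by (simp only: norm_orthonormal_columns [OF membership_scaled_orthonormal [OF memb sizes]])
  finally show ?thesis .
qed

theorem lemma2:
  fixes Theta :: "real^'k^'n"
    and B :: "real^'k^'k"
    and U :: "real^'r^'n" and Sigma :: "real^'r^'r"
    and L :: "real^'r^'k" and D :: "real^'r^'r"
    and Delta :: "real^'k^'k"
    and eta iota :: real
  assumes memb: "membership_matrix Theta"
    and sizes: "\<forall>k. comm_size Theta k \<ge> 1"
    and B_range: "\<forall>k l. 0 \<le> B $ k $ l \<and> B $ k $ l \<le> 1"
    and B_sym: "transpose B = B"
    and rankB: "rank B = CARD('r)"
    and rank_lt: "CARD('r) < CARD('k)"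
    and U_orth: "transpose U ** U = mat 1"
    and Sigma_diag: "diag_mat Sigma"
    and P_eig: "Theta ** B ** transpose Theta = U ** Sigma ** transpose U"
    and Delta_def: "Delta = (\<chi> i j. if i = j then sqrt (real (comm_size Theta i)) else 0)"
    and L_orth: "transpose L ** L = mat 1"
    and D_diag: "diag_mat D"
    and DBD_eig: "Delta ** B ** Delta = L ** D ** transpose L"
    and eta_pos: "eta > 0"
    and sep: "\<forall>k l. k \<noteq> l \<longrightarrow> B $ k $ k + B $ l $ l - 2 * B $ k $ l \<ge> eta"
    and Sigma_bd: "\<forall>i. 0 < Sigma $ i $ i \<and> Sigma $ i $ i \<le> iota"
  shows "\<forall>k l. k \<noteq> l \<longrightarrow>
           norm ((1 / sqrt (real (comm_size Theta k))) *\<^sub>R (L $ k)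
               - (1 / sqrt (real (comm_size Theta l))) *\<^sub>R (L $ l)) \<ge> sqrt (eta / iota)"
proof (intro allI impI)
  fix k l :: 'k
  assume "k \<noteq> l"
  let ?n = "\<lambda>m. real (comm_size Theta m)"
  have pos: "\<And>m. 0 < comm_size Theta m"
    using sizes by (metis One_nat_def Suc_le_eq)
  have Delta: "Delta = diag_matrix (\<lambda>m. sqrt (?n m))"
    unfolding Delta_def diag_matrix_def ..
  then have Delta_sym: "transpose Delta = Delta"
    by simp
  have iota_pos: "0 < iota"
    using Sigma_bd by (meson less_le_trans)
  define x where "x = diag_matrix (\<lambda>m. 1 / sqrt (?n m)) *v (axis k 1 - axis l 1)"
  have Delta_x: "Delta *v x = axis k 1 - axis l 1"
    by (simp add: Delta x_def matrix_vector_mul_assoc diag_matrix_mult pos [THEN gr_implies_not0]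
        diag_matrix_const)
  have L_x: "transpose L *v x = (1 / sqrt (?n k)) *\<^sub>R L $ k - (1 / sqrt (?n l)) *\<^sub>R L $ l"
    by (simp only: x_def matrix_vector_mult_diff_distrib diag_matrix_axis matrix_vector_mult_scaleR
        transpose_matrix_vector_axis)
  have block: "inner y ((Delta ** B ** Delta) *v y) \<le> iota * norm y ^ 2" for y
    unfolding Delta
    by (rule membership_block_quadratic_form_le [OF memb pos U_orth Sigma_diag P_eig])
      (use Sigma_bd iota_pos in auto)
  have "eta \<le> inner (axis k 1 - axis l 1) (B *v (axis k 1 - axis l 1))"
    using sep \<open>k \<noteq> l\<close> by (simp add: quadratic_form_axis_diff [OF B_sym])
  also have "\<dots> = inner x ((Delta ** B ** Delta) *v x)"
    using quadratic_form_congruence [of x Delta B] by (simp only: Delta_sym Delta_x)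
  also have "\<dots> \<le> iota * norm (transpose L *v x) ^ 2"
    using L_orth block unfolding DBD_eig by (rule quadratic_form_le_norm_transpose)
  finally have "sqrt (eta / iota) \<le> norm (transpose L *v x)"
    using iota_pos by (simp add: real_le_lsqrt pos_divide_le_eq mult.commute)
  then show "norm ((1 / sqrt (?n k)) *\<^sub>R L $ k - (1 / sqrt (?n l)) *\<^sub>R L $ l) \<ge> sqrt (eta / iota)"
    by (simp only: L_x)
qed

end
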